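(* There exists a linear bijection $f:\mathbb{R}^2\to\mathbb{C}$ of real vector spaces such that $f(\mathcal{E})=\mathcal{R}$ and $f(\mathbb{Z}^2)=\mathbb{Z}+\mathbb{Z}\alpha$.
   Context: Let $a,b$ be integers with $-a+1\le b\le -2$, let $\beta$ be the real dominant root of $x^3-ax^2-bx-1$, and assume its conjugates $\alpha,\overline\alpha$ are non-real. Let $T_0=1$, $T_1=a$, $T_2=a^2+b$, $T_{n+3}=aT_{n+2}+bT_{n+1}+T_n$. Admissibility: a digit sequence with digits in $\{0,\dots,a-1\}$ is admissible if every block satisfies $d_jd_{j-1}\cdots d_{j-k}\le_{\mathrm{lex}}(a-1)(a+b-1)(a+b)\cdots(a+b)$ (same length). Each $N\in\mathbb{Z}^+$ has a unique admissible $T$-representation $N=\sum_j d_jT_j$. We write $\delta(N)=N(1/\beta,1/\beta^2)-(\sum_{j\ge1}d_jT_{j-1},\sum_{j\ge2}d_jT_{j-2})$, and $\mathcal{E}=\overline{\{\delta(N):N\in\mathbb{Z}^+\}}\subset\mathbb{R}^2$. The Rauzy fractal is $\mathcal{R}=\{\sum_{i\ge2}d_i\alpha^i:(d_i)_{i\ge2}\text{ admissible}\}\subset\mathbb{C}$. *)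

theory Defs
  imports "HOL-Analysis.Analysis"
begin

fun Tseq :: "int \<Rightarrow> int \<Rightarrow> nat \<Rightarrow> int" where
  "Tseq a b 0 = 1"
| "Tseq a b (Suc 0) = a"
| "Tseq a b (Suc (Suc 0)) = a^2 + b"
| "Tseq a b (Suc (Suc (Suc n))) =
     a * Tseq a b (Suc (Suc n)) + b * Tseq a b (Suc n) + Tseq a b n"

definition cmpword :: "int \<Rightarrow> int \<Rightarrow> nat \<Rightarrow> int" where
  "cmpword a b i = (if i = 0 then a - 1 else if i = 1 then a + b - 1 else a + b)"

definition lex_le :: "(nat \<Rightarrow> int) \<Rightarrow> (nat \<Rightarrow> int) \<Rightarrow> nat \<Rightarrow> bool" where
  "lex_le x y k \<longleftrightarrow> (\<forall>i\<le>k. x i = y i) \<or>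
     (\<exists>m\<le>k. (\<forall>i<m. x i = y i) \<and> x m < y m)"

definition admissible :: "int \<Rightarrow> int \<Rightarrow> nat \<Rightarrow> (nat \<Rightarrow> int) \<Rightarrow> bool" where
  "admissible a b lo d \<longleftrightarrow>
     (\<forall>j\<ge>lo. 0 \<le> d j \<and> d j \<le> a - 1) \<and>
     (\<forall>j k. lo + k \<le> j \<longrightarrow> lex_le (\<lambda>i. d (j - i)) (cmpword a b) k)"

definition Trep :: "int \<Rightarrow> int \<Rightarrow> nat \<Rightarrow> (nat \<Rightarrow> int) \<Rightarrow> bool" where
  "Trep a b N d \<longleftrightarrow> admissible a b 0 d \<and>
     (\<exists>n. (\<forall>j>n. d j = 0) \<and> int N = (\<Sum>j\<le>n. d j * Tseq a b j))"

definition Tdigits :: "int \<Rightarrow> int \<Rightarrow> nat \<Rightarrow> nat \<Rightarrow> int" where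
  "Tdigits a b N = (THE d. Trep a b N d)"

definition delta :: "int \<Rightarrow> int \<Rightarrow> real \<Rightarrow> nat \<Rightarrow> real \<times> real" where
  "delta a b \<beta> N =
     (let d = Tdigits a b N in
      (real N / \<beta> - real_of_int (\<Sum>j\<in>{j. 1 \<le> j \<and> d j \<noteq> 0}. d j * Tseq a b (j - 1)),
       real N / \<beta>^2 - real_of_int (\<Sum>j\<in>{j. 2 \<le> j \<and> d j \<noteq> 0}. d j * Tseq a b (j - 2))))"

definition Eset :: "int \<Rightarrow> int \<Rightarrow> real \<Rightarrow> (real \<times> real) set" where
  "Eset a b \<beta> = closure {delta a b \<beta> N | N. N \<ge> 1}"

definition Rauzy :: "int \<Rightarrow> int \<Rightarrow> complex \<Rightarrow> complex set" where
  "Rauzy a b \<alpha> = {(\<Sum>i. of_int (d (i + 2)) * \<alpha> ^ (i + 2)) | d. admissible a b 2 d}"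

end

theory Submission
  imports Defs
begin

(*
  Take f (x, y) = -x (1 + b \<alpha>) - y \<alpha>.  It maps Z^2 onto Z + Z \<alpha>, and it maps (1/\<beta>, 1/\<beta>^2) to \<alpha>^2
  because \<alpha> and \<beta> are distinct roots of the same cubic.  As \<alpha>^(j+2) and
  T_j \<alpha>^2 + (1 + b \<alpha>) T_(j-1) + \<alpha> T_(j-2) satisfy the same recurrence, f sends
  (T_j/\<beta> - T_(j-1), T_j/\<beta>^2 - T_(j-2)) to \<alpha>^(j+2); summing over the digits of N, f (\<delta> N) is the
  point \<Sum> d_j \<alpha>^(j+2) of the Rauzy fractal with the digits of N.  These points are dense in the
  fractal, since truncating an admissible expansion and appending a digit 1 gives the digits of a
  positive integer; and the fractal is closed, as a continuous image (|\<alpha>| < 1) of a compact space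
  of digit sequences.  So f (E), the closure of the points f (\<delta> N), is the fractal.

  On the combinatorial side, a digit sequence is admissible iff every partial value
  \<Sum>_(j<n) d_j T_j stays below T_n, which yields existence and uniqueness of T-representations.
*)

section \<open>Lexicographic comparison and admissibility\<close>

lemma lex_le_imp_le_0: "lex_le x y k \<Longrightarrow> x 0 \<le> y 0"
  unfolding lex_le_def
proof (elim disjE exE conjE)
  fix m assume "m \<le> k" "\<forall>i<m. x i = y i" "x m < y m"
  then show "x 0 \<le> y 0" by (cases m) auto
qed auto

lemma lex_le_if_less_0: "x 0 < y 0 \<Longrightarrow> lex_le x y k"
  unfolding lex_le_def by blast

lemma lex_le_cong:
  assumes "\<And>i. i \<le> k \<Longrightarrow> x i = x' i" and "\<And>i. i \<le> k \<Longrightarrow> y i = y' i"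
  shows "lex_le x y k = lex_le x' y' k"
proof -
  have "(\<forall>i\<le>k. x i = y i) = (\<forall>i\<le>k. x' i = y' i)" using assms by auto
  moreover have "\<And>m. m \<le> k \<Longrightarrow>
      ((\<forall>i<m. x i = y i) \<and> x m < y m) = ((\<forall>i<m. x' i = y' i) \<and> x' m < y' m)"
    using assms by auto
  ultimately show ?thesis unfolding lex_le_def by blast
qed

lemma lex_le_tail:
  "lex_le x y (Suc k) \<Longrightarrow> x 0 = y 0 \<Longrightarrow> lex_le (\<lambda>i. x (Suc i)) (\<lambda>i. y (Suc i)) k"
  unfolding lex_le_def
proof (elim disjE exE conjE)
  fix m assume m: "m \<le> Suc k" "\<forall>i<m. x i = y i" "x m < y m" "x 0 = y 0"
  then obtain m' where "m = Suc m'" by (cases m) auto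
  with m show "(\<forall>i\<le>k. x (Suc i) = y (Suc i)) \<or>
      (\<exists>m\<le>k. (\<forall>i<m. x (Suc i) = y (Suc i)) \<and> x (Suc m) < y (Suc m))"
    by (intro disjI2 exI[of _ m']) auto
qed auto

lemma not_lex_le_imp_greater:
  assumes "\<not> lex_le x y k"
  shows "\<exists>m\<le>k. (\<forall>i<m. x i = y i) \<and> y m < x m"
proof -
  have ex: "\<exists>i. i \<le> k \<and> x i \<noteq> y i" using assms unfolding lex_le_def by auto
  define m where "m = (LEAST i. i \<le> k \<and> x i \<noteq> y i)"
  have m: "m \<le> k" "x m \<noteq> y m" using LeastI_ex[OF ex] unfolding m_def by auto
  have agree: "\<forall>i<m. x i = y i"
  proof (intro allI impI)
    fix i assume "i < m"
    then have "\<not> (i \<le> k \<and> x i \<noteq> y i)" unfolding m_def using not_less_Least by blast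
    with \<open>i < m\<close> m(1) show "x i = y i" by auto
  qed
  have "\<not> x m < y m" using assms m agree unfolding lex_le_def by auto
  with m agree show ?thesis by (intro exI[of _ m]) auto
qed

lemma admissible_cong:
  assumes "\<And>j. lo \<le> j \<Longrightarrow> d j = d' j"
  shows "admissible a b lo d = admissible a b lo d'"
proof -
  have "lex_le (\<lambda>i. d (j - i)) w k = lex_le (\<lambda>i. d' (j - i)) w k" if "lo + k \<le> j" for j k w
    using that assms by (intro lex_le_cong) auto
  then show ?thesis unfolding admissible_def using assms by auto
qed

lemma admissible_shift: "admissible a b (lo + s) (\<lambda>i. d (i - s)) = admissible a b lo d"
proof -
  have digits: "(\<forall>j\<ge>lo + s. P (d (j - s))) \<longleftrightarrow> (\<forall>j\<ge>lo. P (d j))" for P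
  proof
    assume H: "\<forall>j\<ge>lo + s. P (d (j - s))"
    show "\<forall>j\<ge>lo. P (d j)"
    proof (intro allI impI)
      fix j assume "lo \<le> j"
      then show "P (d j)" using H[rule_format, of "j + s"] by simp
    qed
  qed auto
  have blocks: "(\<forall>j m. lo + s + m \<le> j \<longrightarrow> lex_le (\<lambda>i. d (j - i - s)) (cmpword a b) m) \<longleftrightarrow>
      (\<forall>j m. lo + m \<le> j \<longrightarrow> lex_le (\<lambda>i. d (j - i)) (cmpword a b) m)"
  proof (intro iffI allI impI)
    fix j m assume H: "\<forall>j m. lo + s + m \<le> j \<longrightarrow> lex_le (\<lambda>i. d (j - i - s)) (cmpword a b) m"
      and "lo + m \<le> j"
    then have "lo + s + m \<le> j + s" by simp
    with H have "lex_le (\<lambda>i. d (j + s - i - s)) (cmpword a b) m" by blast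
    then show "lex_le (\<lambda>i. d (j - i)) (cmpword a b) m" by simp
  next
    fix j m assume H: "\<forall>j m. lo + m \<le> j \<longrightarrow> lex_le (\<lambda>i. d (j - i)) (cmpword a b) m"
      and "lo + s + m \<le> j"
    then have "lo + m \<le> j - s" by simp
    with H have "lex_le (\<lambda>i. d (j - s - i)) (cmpword a b) m" by blast
    then show "lex_le (\<lambda>i. d (j - i - s)) (cmpword a b) m" by (simp add: diff_commute add.commute)
  qed
  show ?thesis unfolding admissible_def using digits[of "\<lambda>x. 0 \<le> x \<and> x \<le> a - 1"] blocks by simp
qed

lemma admissible_if_approximated:
  assumes "\<And>L. \<exists>n. admissible a b lo (e n) \<and> (\<forall>i<L. e n i = d i)"
  shows "admissible a b lo d"
  unfolding admissible_def
proof (intro conjI allI impI)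
  fix j assume "lo \<le> j"
  obtain n where "admissible a b lo (e n)" "\<forall>i<Suc j. e n i = d i" using assms by blast
  with \<open>lo \<le> j\<close> show "0 \<le> d j" "d j \<le> a - 1" unfolding admissible_def by auto
next
  fix j k assume "lo + k \<le> j"
  obtain n where n: "admissible a b lo (e n)" "\<forall>i<Suc j. e n i = d i" using assms by blast
  then have "lex_le (\<lambda>i. e n (j - i)) (cmpword a b) k = lex_le (\<lambda>i. d (j - i)) (cmpword a b) k"
    by (intro lex_le_cong) auto
  with n(1) \<open>lo + k \<le> j\<close> show "lex_le (\<lambda>i. d (j - i)) (cmpword a b) k"
    unfolding admissible_def by blast
qed

section \<open>T-representations\<close>

text \<open>\<open>T_(j-k)\<close> extended by \<open>0\<close> for \<open>j < k\<close>, matching the sums over \<open>j \<ge> 1\<close> and \<open>j \<ge> 2\<close>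
  in \<open>delta\<close>.\<close>

definition Tshift :: "int \<Rightarrow> int \<Rightarrow> nat \<Rightarrow> nat \<Rightarrow> int" where
  "Tshift a b k j = (if j < k then 0 else Tseq a b (j - k))"

lemma Tshift_rec:
  assumes "k \<le> 2"
  shows "Tshift a b k (j + 3) =
    a * Tshift a b k (j + 2) + b * Tshift a b k (j + 1) + Tshift a b k j"
proof -
  consider "k = 0" | "k = 1" | "k = 2" using assms by linarith
  then show ?thesis
  proof cases
    case 1
    then show ?thesis by (simp add: Tshift_def numeral_eq_Suc)
  next
    case 2
    then show ?thesis by (cases j) (simp_all add: Tshift_def numeral_eq_Suc power2_eq_square)
  next
    case 3
    then show ?thesis
      by (cases j; cases "j - 1") (simp_all add: Tshift_def numeral_eq_Suc power2_eq_square)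
  qed
qed

lemma Tseq_Suc_Suc_eq_sum:
  "Tseq a b (Suc (Suc n)) =
     (a - 1) * Tseq a b (Suc n) + (a + b - 1) * Tseq a b n + (a + b) * (\<Sum>i<n. Tseq a b i) + 1"
  by (induction n) (simp_all add: algebra_simps power2_eq_square)

text \<open>\<open>cmp_value a b s n\<close> is the value \<open>\<Sum>_(i<n) c_(s+i) T_(n-1-i)\<close> of the length-\<open>n\<close> block
  \<open>c_s c_(s+1) ...\<close> of the comparison word, read most significant digit first.\<close>

fun cmp_value :: "int \<Rightarrow> int \<Rightarrow> nat \<Rightarrow> nat \<Rightarrow> int" where
  "cmp_value a b s 0 = 0"
| "cmp_value a b s (Suc n) = cmpword a b s * Tseq a b n + cmp_value a b (Suc s) n"

lemma cmp_value_ge_2: "2 \<le> s \<Longrightarrow> cmp_value a b s n = (a + b) * (\<Sum>i<n. Tseq a b i)"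
  by (induction n arbitrary: s) (simp_all add: cmpword_def algebra_simps)

lemma cmp_value_Suc_Suc:
  "cmp_value a b s (Suc (Suc n)) =
     cmpword a b s * Tseq a b (Suc n) + cmpword a b (Suc s) * Tseq a b n
       + (a + b) * (\<Sum>i<n. Tseq a b i)"
  by (simp add: cmp_value_ge_2)

lemma cmp_value_0: "cmp_value a b 0 n = Tseq a b n - 1"
proof (cases n)
  case (Suc m)
  then show ?thesis
    by (cases m) (simp_all add: cmp_value_ge_2 Tseq_Suc_Suc_eq_sum cmpword_def)
qed simp

definition digit_value :: "int \<Rightarrow> int \<Rightarrow> (nat \<Rightarrow> int) \<Rightarrow> nat \<Rightarrow> int" where
  "digit_value a b d n = (\<Sum>j<n. d j * Tseq a b j)"

lemma digit_value_0 [simp]: "digit_value a b d 0 = 0"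
  by (simp add: digit_value_def)

lemma digit_value_Suc [simp]: "digit_value a b d (Suc n) = d n * Tseq a b n + digit_value a b d n"
  by (simp add: digit_value_def)

lemma digit_value_cong: "(\<And>j. j < n \<Longrightarrow> d j = d' j) \<Longrightarrow> digit_value a b d n = digit_value a b d' n"
  unfolding digit_value_def by (intro sum.cong) auto

lemma digit_value_eq_beyond:
  assumes "\<And>j. n \<le> j \<Longrightarrow> d j = 0" and "n \<le> m"
  shows "digit_value a b d m = digit_value a b d n"
  using assms(2) by (induction m rule: dec_induct) (auto simp: assms(1))

locale T_numeration =
  fixes a b :: int
  assumes b_lower: "- a + 1 \<le> b" and b_upper: "b \<le> -2"
begin

lemma a_ge_3: "3 \<le> a"
  using b_lower b_upper by linarith

lemma cmpword_nonneg: "0 \<le> cmpword a b s"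
  using b_lower b_upper by (auto simp: cmpword_def)

lemma Tseq_pos: "1 \<le> Tseq a b n"
proof (induction n rule: nat_less_induct)
  case (1 n)
  consider "n = 0" | "n = 1" | k where "n = Suc (Suc k)"
    by (metis One_nat_def not0_implies_Suc)
  then show ?case
  proof cases
    case 3
    with 1 have T: "1 \<le> Tseq a b (Suc k)" "1 \<le> Tseq a b k" by auto
    have "\<forall>i<k. 0 \<le> Tseq a b i"
      using 1 3 by (metis less_SucI order_trans zero_le_one)
    then have "0 \<le> (\<Sum>i<k. Tseq a b i)" by (intro sum_nonneg) simp
    then have "0 \<le> (a - 1) * Tseq a b (Suc k)" "0 \<le> (a + b - 1) * Tseq a b k"
      "0 \<le> (a + b) * (\<Sum>i<k. Tseq a b i)"
      using a_ge_3 b_lower T by simp_all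
    then show ?thesis unfolding 3 Tseq_Suc_Suc_eq_sum by linarith
  qed (use a_ge_3 in auto)
qed

lemma Tseq_strict_mono: "strict_mono (Tseq a b)"
proof (rule strict_mono_Suc_iff[THEN iffD2], intro allI)
  fix n
  show "Tseq a b n < Tseq a b (Suc n)"
  proof (cases n)
    case (Suc k)
    have "2 * Tseq a b (Suc k) \<le> (a - 1) * Tseq a b (Suc k)"
      using a_ge_3 Tseq_pos[of "Suc k"] by (intro mult_right_mono) auto
    moreover have "0 \<le> (\<Sum>i<k. Tseq a b i)"
      using Tseq_pos by (intro sum_nonneg) (meson order_trans zero_le_one)
    then have "0 \<le> (a + b - 1) * Tseq a b k" "0 \<le> (a + b) * (\<Sum>i<k. Tseq a b i)"
      using b_lower Tseq_pos[of k] by simp_all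
    ultimately show ?thesis
      unfolding Suc Tseq_Suc_Suc_eq_sum using Tseq_pos[of "Suc k"] by linarith
  qed (use a_ge_3 in simp)
qed

lemma Tseq_gt: "int n < Tseq a b n"
proof (induction n)
  case (Suc n)
  then show ?case using strict_monoD[OF Tseq_strict_mono, of n "Suc n"] by simp
qed simp

lemma cmp_value_nonneg: "0 \<le> cmp_value a b s n"
proof (induction n arbitrary: s)
  case (Suc n)
  then show ?case using cmpword_nonneg[of s] Tseq_pos[of n] by simp
qed simp

lemma cmp_value_Suc_le_0: "cmp_value a b (Suc s) n \<le> cmp_value a b 0 n"
proof -
  consider "n = 0" | "n = 1" | k where "n = Suc (Suc k)"
    by (metis One_nat_def not0_implies_Suc)
  then show ?thesis
  proof cases
    case 2
    then show ?thesis using b_lower b_upper by (auto simp: cmpword_def)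
  next
    case 3
    have c0: "cmpword a b (Suc s) + 1 \<le> cmpword a b 0"
      and c1: "cmpword a b (Suc (Suc s)) \<le> cmpword a b (Suc 0) + 1"
      using b_lower b_upper by (auto simp: cmpword_def)
    have "Tseq a b (Suc k) + cmpword a b (Suc s) * Tseq a b (Suc k)
        \<le> cmpword a b 0 * Tseq a b (Suc k)"
      using mult_right_mono[OF c0, of "Tseq a b (Suc k)"] Tseq_pos[of "Suc k"]
      by (simp add: algebra_simps)
    moreover have "cmpword a b (Suc (Suc s)) * Tseq a b k
        \<le> cmpword a b (Suc 0) * Tseq a b k + Tseq a b k"
      using mult_right_mono[OF c1, of "Tseq a b k"] Tseq_pos[of k] by (simp add: algebra_simps)
    moreover have "Tseq a b k \<le> Tseq a b (Suc k)"
      using strict_monoD[OF Tseq_strict_mono, of k "Suc k"] by simp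
    ultimately show ?thesis unfolding 3 cmp_value_Suc_Suc by linarith
  qed simp
qed

lemma digit_value_nonneg: "(\<And>j. 0 \<le> d j) \<Longrightarrow> 0 \<le> digit_value a b d n"
  unfolding digit_value_def using Tseq_pos
  by (intro sum_nonneg) (meson order_trans zero_le_one zero_le_mult_iff)

text \<open>Either the top digit is below \<open>c_s\<close>, and the lower digits contribute at most
  \<open>T_n - 1 = cmp_value a b 0 n\<close>, or it equals \<open>c_s\<close> and the induction moves on to the next
  suffix of the comparison word.\<close>

lemma digit_value_le_cmp_value:
  assumes adm: "admissible a b 0 d"
    and "lex_le (\<lambda>i. d (n - 1 - i)) (\<lambda>i. cmpword a b (s + i)) (n - 1)"
  shows "digit_value a b d n \<le> cmp_value a b s n"
  using assms(2)
proof (induction n arbitrary: s)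
  case (Suc n)
  have lex: "lex_le (\<lambda>i. d (n - i)) (\<lambda>i. cmpword a b (s + i)) n"
    using Suc.prems by simp
  have below: "digit_value a b d n \<le> Tseq a b n - 1"
  proof -
    have "lex_le (\<lambda>i. d (n - 1 - i)) (\<lambda>i. cmpword a b (0 + i)) (n - 1)"
      using adm unfolding admissible_def add_0 by blast
    then show ?thesis using Suc.IH cmp_value_0 by fastforce
  qed
  have "d n \<le> cmpword a b s" using lex_le_imp_le_0[OF lex] by simp
  then consider "d n < cmpword a b s" | "d n = cmpword a b s" by linarith
  then show ?case
  proof cases
    case 1
    then have "d n * Tseq a b n \<le> (cmpword a b s - 1) * Tseq a b n"
      using Tseq_pos[of n] by (intro mult_right_mono) auto
    then show ?thesis using below cmp_value_nonneg[of "Suc s" n] by (simp add: algebra_simps)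
  next
    case 2
    have "digit_value a b d n \<le> cmp_value a b (Suc s) n"
    proof (cases n)
      case (Suc m)
      have "lex_le (\<lambda>i. d (n - 1 - i)) (\<lambda>i. cmpword a b (Suc s + i)) (n - 1)"
        using lex_le_tail[OF lex[unfolded Suc]] 2 Suc by simp
      then show ?thesis using Suc.IH by blast
    qed simp
    then show ?thesis using 2 by simp
  qed
qed simp

lemma digit_value_less_Tseq:
  assumes "admissible a b 0 d"
  shows "digit_value a b d n < Tseq a b n"
proof -
  have "lex_le (\<lambda>i. d (n - 1 - i)) (\<lambda>i. cmpword a b (0 + i)) (n - 1)"
    using assms unfolding admissible_def add_0 by blast
  then show ?thesis using digit_value_le_cmp_value[OF assms] cmp_value_0[of a b n] by fastforce
qed

lemma cmp_value_less_digit_value: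
  assumes nonneg: "\<And>j. 0 \<le> d j"
    and "m < n" and "\<forall>i<m. d (n - 1 - i) = cmpword a b (s + i)"
    and "cmpword a b (s + m) < d (n - 1 - m)"
  shows "cmp_value a b s n < digit_value a b d n"
  using assms(2-)
proof (induction n arbitrary: s m)
  case (Suc n)
  show ?case
  proof (cases "m = 0")
    case True
    then have "(cmpword a b s + 1) * Tseq a b n \<le> d n * Tseq a b n"
      using Suc.prems Tseq_pos[of n] by (intro mult_right_mono) auto
    moreover have "cmp_value a b (Suc s) n \<le> Tseq a b n - 1"
      using cmp_value_Suc_le_0[of s n] cmp_value_0[of a b n] by simp
    ultimately show ?thesis
      using digit_value_nonneg[of d n] nonneg by (simp add: algebra_simps)
  next
    case False
    then obtain m' where m: "m = Suc m'" using not0_implies_Suc by blast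
    have "d n = cmpword a b s" using Suc.prems(2) m by fastforce
    moreover have "cmp_value a b (Suc s) n < digit_value a b d n"
    proof (rule Suc.IH)
      show "m' < n" using Suc.prems(1) m by simp
      show "\<forall>i<m'. d (n - 1 - i) = cmpword a b (Suc s + i)"
      proof (intro allI impI)
        fix i assume "i < m'"
        then have "d (Suc n - 1 - Suc i) = cmpword a b (s + Suc i)" using Suc.prems(2) m by blast
        then show "d (n - 1 - i) = cmpword a b (Suc s + i)" by simp
      qed
      show "cmpword a b (Suc s + m') < d (n - 1 - m')"
        using Suc.prems(3) m by simp
    qed
    ultimately show ?thesis by simp
  qed
qed simp

lemma admissible_iff_digit_value_less:
  "admissible a b 0 d \<longleftrightarrow> (\<forall>j. 0 \<le> d j) \<and> (\<forall>n. digit_value a b d n < Tseq a b n)"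
proof (intro iffI conjI allI)
  assume "admissible a b 0 d"
  then show "0 \<le> d j" "digit_value a b d n < Tseq a b n" for j n
    using digit_value_less_Tseq unfolding admissible_def by auto
next
  assume H: "(\<forall>j. 0 \<le> d j) \<and> (\<forall>n. digit_value a b d n < Tseq a b n)"
  have lex: "lex_le (\<lambda>i. d (j - i)) (cmpword a b) k" if "k \<le> j" for j k
  proof (rule ccontr)
    assume "\<not> lex_le (\<lambda>i. d (j - i)) (cmpword a b) k"
    then obtain m where "m \<le> k" "\<forall>i<m. d (j - i) = cmpword a b i" "cmpword a b m < d (j - m)"
      using not_lex_le_imp_greater by blast
    then have "cmp_value a b 0 (Suc j) < digit_value a b d (Suc j)"
      using that H by (intro cmp_value_less_digit_value) auto
    moreover have "digit_value a b d (Suc j) < Tseq a b (Suc j)" using H by blast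
    ultimately show False using cmp_value_0[of a b "Suc j"] by linarith
  qed
  have "d j \<le> a - 1" for j
    using lex_le_imp_le_0[OF lex[of 0 j]] by (simp add: cmpword_def)
  then show "admissible a b 0 d" unfolding admissible_def using lex H by auto
qed

lemma admissible_digit_value_div_mod:
  assumes "admissible a b 0 d"
  shows "digit_value a b d (Suc n) div Tseq a b n = d n"
    and "digit_value a b d (Suc n) mod Tseq a b n = digit_value a b d n"
proof -
  have "0 \<le> digit_value a b d n" "digit_value a b d n < Tseq a b n"
    using assms digit_value_nonneg digit_value_less_Tseq unfolding admissible_def by auto
  then show "digit_value a b d (Suc n) div Tseq a b n = d n"
    and "digit_value a b d (Suc n) mod Tseq a b n = digit_value a b d n"
    by (simp_all add: add.commute)
qed

lemma admissible_digit_value_inj: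
  assumes "admissible a b 0 d" "admissible a b 0 d'"
    and "digit_value a b d n = digit_value a b d' n"
  shows "\<forall>j<n. d j = d' j"
  using assms(3)
proof (induction n)
  case (Suc n)
  then have "d n = d' n" "digit_value a b d n = digit_value a b d' n"
    using admissible_digit_value_div_mod[OF assms(1)] admissible_digit_value_div_mod[OF assms(2)]
    by metis+
  with Suc.IH show ?case using less_Suc_eq by auto
qed simp

lemma Trep_iff:
  "Trep a b N d \<longleftrightarrow>
     admissible a b 0 d \<and> (\<exists>n. (\<forall>j\<ge>n. d j = 0) \<and> digit_value a b d n = int N)"
proof -
  have "(\<exists>n. (\<forall>j>n. d j = 0) \<and> int N = (\<Sum>j\<le>n. d j * Tseq a b j)) \<longleftrightarrow>
      (\<exists>n. (\<forall>j\<ge>n. d j = 0) \<and> digit_value a b d n = int N)"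
  proof
    assume "\<exists>n. (\<forall>j>n. d j = 0) \<and> int N = (\<Sum>j\<le>n. d j * Tseq a b j)"
    then obtain n where "\<forall>j>n. d j = 0" "int N = digit_value a b d (Suc n)"
      unfolding digit_value_def lessThan_Suc_atMost by blast
    then show "\<exists>n. (\<forall>j\<ge>n. d j = 0) \<and> digit_value a b d n = int N"
      by (intro exI[of _ "Suc n"]) auto
  next
    assume "\<exists>n. (\<forall>j\<ge>n. d j = 0) \<and> digit_value a b d n = int N"
    then obtain n where "\<forall>j\<ge>n. d j = 0" "digit_value a b d (Suc n) = int N"
      by auto
    then show "\<exists>n. (\<forall>j>n. d j = 0) \<and> int N = (\<Sum>j\<le>n. d j * Tseq a b j)"
      unfolding digit_value_def lessThan_Suc_atMost by (intro exI[of _ n]) auto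
  qed
  then show ?thesis unfolding Trep_def by simp
qed

lemma Trep_unique:
  assumes "Trep a b N d" and "Trep a b N d'"
  shows "d = d'"
proof -
  obtain n where n: "\<forall>j\<ge>n. d j = 0" "\<forall>j\<ge>n. d' j = 0"
    "digit_value a b d n = int N" "digit_value a b d' n = int N"
  proof -
    obtain n1 n2 where "\<forall>j\<ge>n1. d j = 0" "digit_value a b d n1 = int N"
      "\<forall>j\<ge>n2. d' j = 0" "digit_value a b d' n2 = int N"
      using assms unfolding Trep_iff by blast
    moreover have "digit_value a b d (max n1 n2) = digit_value a b d n1"
      "digit_value a b d' (max n1 n2) = digit_value a b d' n2"
      using calculation by (intro digit_value_eq_beyond; simp)+
    ultimately show ?thesis by (intro that[of "max n1 n2"]) auto
  qed
  have "\<forall>j<n. d j = d' j"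
    using assms n(3,4) by (intro admissible_digit_value_inj) (auto simp: Trep_iff)
  with n(1,2) show "d = d'" by (metis not_le ext)
qed

lemma digit_value_surj:
  "0 \<le> M \<Longrightarrow> M < Tseq a b n \<Longrightarrow>
     \<exists>d. admissible a b 0 d \<and> (\<forall>j\<ge>n. d j = 0) \<and> digit_value a b d n = M"
proof (induction n arbitrary: M)
  case 0
  then show ?case
    by (intro exI[of _ "\<lambda>_. 0"])
      (auto simp: admissible_iff_digit_value_less digit_value_def
        less_le_trans[OF zero_less_one Tseq_pos])
next
  case (Suc n)
  define q r where "q = M div Tseq a b n" and "r = M mod Tseq a b n"
  have Tn: "0 < Tseq a b n" using Tseq_pos[of n] by simp
  obtain d where d: "admissible a b 0 d" "\<forall>j\<ge>n. d j = 0" "digit_value a b d n = r"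
    using Suc.IH[of r] Tn unfolding r_def by auto
  define d' where "d' = d(n := q)"
  have low: "digit_value a b d' j = digit_value a b d j" if "j \<le> n" for j
    using that by (intro digit_value_cong) (auto simp: d'_def)
  have top: "digit_value a b d' (Suc n) = M"
    using low[of n] d(3) by (simp add: d'_def q_def r_def)
  have zero: "\<forall>j\<ge>Suc n. d' j = 0" using d(2) by (auto simp: d'_def)
  have "digit_value a b d' j < Tseq a b j" for j
  proof (cases "j \<le> n")
    case True
    then show ?thesis using low d(1) digit_value_less_Tseq by simp
  next
    case False
    then have "digit_value a b d' j = M"
      using digit_value_eq_beyond[of "Suc n" d' j] zero top by simp
    moreover have "Tseq a b (Suc n) \<le> Tseq a b j"
      using False strict_mono_less_eq[OF Tseq_strict_mono] by simp
    ultimately show ?thesis using Suc.prems by simp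
  qed
  moreover have "0 \<le> d' j" for j
    using d(1) Suc.prems Tn unfolding admissible_def d'_def q_def by (auto simp: div_int_pos_iff)
  ultimately have "admissible a b 0 d'" by (simp add: admissible_iff_digit_value_less)
  with zero top show ?case by blast
qed

lemma Trep_exists: "\<exists>d. Trep a b N d"
  using digit_value_surj[of "int N" N] Tseq_gt[of N] unfolding Trep_iff by auto

lemma Tdigits_Trep: "Trep a b N (Tdigits a b N)"
  unfolding Tdigits_def using Trep_exists Trep_unique by (metis theI)

lemma Tdigits_eqI: "Trep a b N d \<Longrightarrow> Tdigits a b N = d"
  using Tdigits_Trep Trep_unique by blast

lemma admissible_truncate_append:
  assumes "admissible a b 0 d" and "0 \<le> c" and "c < a - 1"
  shows "admissible a b 0 (\<lambda>j. if j \<le> n then d j else if j = Suc n then c else 0)"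
    (is "admissible a b 0 ?d")
  unfolding admissible_def
proof (intro conjI allI impI)
  show "0 \<le> ?d j" "?d j \<le> a - 1" for j
    using assms a_ge_3 unfolding admissible_def by auto
  fix j k :: nat assume "0 + k \<le> j"
  show "lex_le (\<lambda>i. ?d (j - i)) (cmpword a b) k"
  proof (cases "j \<le> n")
    case True
    then have "lex_le (\<lambda>i. ?d (j - i)) (cmpword a b) k = lex_le (\<lambda>i. d (j - i)) (cmpword a b) k"
      by (intro lex_le_cong) auto
    with \<open>0 + k \<le> j\<close> assms(1) show ?thesis unfolding admissible_def by blast
  next
    case False
    then have "?d (j - 0) < cmpword a b 0" using assms a_ge_3 by (auto simp: cmpword_def)
    then show ?thesis by (rule lex_le_if_less_0)
  qed
qed

lemma delta_eq_sum:
  assumes "\<forall>j\<ge>n. Tdigits a b N j = 0"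
  shows "delta a b \<beta> N = (\<Sum>j<n. real_of_int (Tdigits a b N j) *\<^sub>R
    (Tseq a b j / \<beta> - Tshift a b 1 j, Tseq a b j / \<beta> ^ 2 - Tshift a b 2 j))"
proof -
  define d where "d = Tdigits a b N"
  have "digit_value a b d n = int N"
    using Tdigits_Trep[of N] assms unfolding Trep_iff d_def
    by (metis digit_value_eq_beyond linorder_le_cases)
  then have N: "real N = (\<Sum>j<n. d j * Tseq a b j)" unfolding digit_value_def by simp
  have support: "{j. k \<le> j \<and> d j \<noteq> 0} \<subseteq> {..<n}" for k
    using assms unfolding d_def by (auto simp: not_less[symmetric])
  have "(\<Sum>j\<in>{j. k \<le> j \<and> d j \<noteq> 0}. d j * Tseq a b (j - k)) = (\<Sum>j<n. d j * Tshift a b k j)" for k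
    by (rule sum.mono_neutral_cong_left) (use support in \<open>auto simp: Tshift_def\<close>)
  then show ?thesis
    unfolding delta_def d_def[symmetric] Let_def N
    by (simp add: prod_eq_iff fst_sum snd_sum sum_divide_distrib sum_subtractf algebra_simps)
qed

end

section \<open>The linear map\<close>

lemma cubic_roots_relation:
  fixes x y A B :: "'a :: field"
  assumes "x ^ 3 - A * x ^ 2 - B * x - 1 = 0" and "y ^ 3 - A * y ^ 2 - B * y - 1 = 0" and "x \<noteq> y"
  shows "x ^ 2 * y ^ 2 + B * x * y + x + y = 0"
proof -
  have "(x - y) * (x ^ 2 * y ^ 2 + B * x * y + x + y) =
      y ^ 2 * (x ^ 3 - A * x ^ 2 - B * x - 1) - x ^ 2 * (y ^ 3 - A * y ^ 2 - B * y - 1)"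
    by algebra
  with assms show ?thesis by simp
qed

lemma cubic_roots_prod:
  fixes x y w A B :: "'a :: field"
  assumes "x ^ 3 - A * x ^ 2 - B * x - 1 = 0" and "y ^ 3 - A * y ^ 2 - B * y - 1 = 0"
    and "w ^ 3 - A * w ^ 2 - B * w - 1 = 0" and "x \<noteq> y" "x \<noteq> w" "y \<noteq> w"
  shows "x * y * w = 1"
  using assms by algebra

lemma recurrence3_eq:
  fixes u v :: "nat \<Rightarrow> 'a :: semiring"
  assumes "\<And>n. u (n + 3) = A * u (n + 2) + B * u (n + 1) + u n"
    and "\<And>n. v (n + 3) = A * v (n + 2) + B * v (n + 1) + v n"
    and "u 0 = v 0" "u 1 = v 1" "u 2 = v 2"
  shows "u n = v n"
proof (induction n rule: nat_less_induct)
  case (1 n)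
  show ?case
  proof (cases "n < 3")
    case True
    then have "n = 0 \<or> n = 1 \<or> n = 2" by auto
    with assms(3-) show ?thesis by auto
  next
    case False
    then obtain m where "n = m + 3" by (metis add.commute le_Suc_ex not_less)
    with 1 show ?thesis using assms(1,2)[of m] by simp
  qed
qed

lemma cubic_root_power:
  fixes x :: "'a :: comm_ring_1"
  assumes "x ^ 3 - of_int a * x ^ 2 - of_int b * x - 1 = 0"
  shows "x ^ (j + 2) = of_int (Tseq a b j) * x ^ 2
    + (1 + of_int b * x) * of_int (Tshift a b 1 j) + x * of_int (Tshift a b 2 j)"
  (is "_ = ?v j")
proof (rule recurrence3_eq[where A = "of_int a" and B = "of_int b"])
  have x3: "x ^ 3 = of_int a * x ^ 2 + of_int b * x + 1" using assms by (simp add: algebra_simps)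
  show "x ^ (n + 3 + 2) = of_int a * x ^ (n + 2 + 2) + of_int b * x ^ (n + 1 + 2) + x ^ (n + 2)"
    for n
  proof -
    have "x ^ (n + 3 + 2) = x ^ (n + 2) * x ^ 3" by (metis add.assoc add.commute power_add)
    then show ?thesis unfolding x3 by (simp add: algebra_simps power_add[symmetric] numeral_eq_Suc)
  qed
  show "?v (n + 3) = of_int a * ?v (n + 2) + of_int b * ?v (n + 1) + ?v n" for n
    using Tshift_rec[of 1 a b n] Tshift_rec[of 2 a b n]
    by (simp add: numeral_eq_Suc algebra_simps)
  show "x ^ (0 + 2) = ?v 0" by (simp add: Tshift_def power2_eq_square)
  show "x ^ (1 + 2) = ?v 1" using x3 by (simp add: Tshift_def algebra_simps power3_eq_cube)
  have "x ^ (2 + 2) = x * x ^ 3" by (simp add: numeral_eq_Suc)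
  also have "\<dots> = x * (of_int a * x ^ 2 + of_int b * x + 1)" unfolding x3 ..
  also have "\<dots> = of_int a * x ^ 3 + of_int b * x ^ 2 + x"
    by (simp add: algebra_simps power2_eq_square power3_eq_cube)
  also have "\<dots> = ?v 2"
    unfolding x3 by (simp add: Tshift_def numeral_2_eq_2 algebra_simps power2_eq_square)
  finally show "x ^ (2 + 2) = ?v 2" .
qed

definition rauzy_map :: "int \<Rightarrow> complex \<Rightarrow> real \<times> real \<Rightarrow> complex" where
  "rauzy_map b \<alpha> z = - of_real (fst z) * (1 + of_int b * \<alpha>) - of_real (snd z) * \<alpha>"

lemma linear_rauzy_map: "linear (rauzy_map b \<alpha>)"
  by (rule linearI) (auto simp: rauzy_map_def scaleR_conv_of_real algebra_simps)

lemma bij_rauzy_map: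
  assumes "Im \<alpha> \<noteq> 0"
  shows "bij (rauzy_map b \<alpha>)"
proof (rule bijI)
  have Re: "Re (rauzy_map b \<alpha> (x, y)) = - x - (of_int b * x + y) * Re \<alpha>"
    and Im: "Im (rauzy_map b \<alpha> (x, y)) = - (of_int b * x + y) * Im \<alpha>" for x y
    by (simp_all add: rauzy_map_def algebra_simps)
  show "inj (rauzy_map b \<alpha>)"
  proof (rule injI)
    fix u v assume eq: "rauzy_map b \<alpha> u = rauzy_map b \<alpha> v"
    obtain x1 y1 x2 y2 where uv: "u = (x1, y1)" "v = (x2, y2)" by fastforce
    have y: "of_int b * x1 + y1 = of_int b * x2 + y2"
      using arg_cong[OF eq, of Im] assms unfolding uv Im by simp
    then have "x1 = x2" using arg_cong[OF eq, of Re] unfolding uv Re by simp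
    with y show "u = v" unfolding uv by simp
  qed
  show "surj (rauzy_map b \<alpha>)"
  proof (rule surjI)
    fix z :: complex
    define s where "s = - Im z / Im \<alpha>"
    define x where "x = - (Re z + s * Re \<alpha>)"
    show "rauzy_map b \<alpha> (x, s - of_int b * x) = z"
      using assms by (intro complex_eqI) (simp_all add: Re Im x_def s_def)
  qed
qed

lemma rauzy_map_lattice:
  "rauzy_map b \<alpha> ` {(real_of_int m, real_of_int n) | m n. True} =
    {of_int m + of_int n * \<alpha> | m n. True}"
proof (intro equalityI subsetI)
  fix z assume "z \<in> rauzy_map b \<alpha> ` {(real_of_int m, real_of_int n) | m n. True}"
  then obtain m n where "z = rauzy_map b \<alpha> (real_of_int m, real_of_int n)" by auto
  then have "z = of_int (- m) + of_int (- (b * m + n)) * \<alpha>"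
    by (simp add: rauzy_map_def algebra_simps)
  then show "z \<in> {of_int m + of_int n * \<alpha> | m n. True}" by blast
next
  fix z assume "z \<in> {of_int m + of_int n * \<alpha> | m n. True}"
  then obtain m n where "z = of_int m + of_int n * \<alpha>" by auto
  then have "z = rauzy_map b \<alpha> (real_of_int (- m), real_of_int (b * m - n))"
    by (simp add: rauzy_map_def algebra_simps)
  then show "z \<in> rauzy_map b \<alpha> ` {(real_of_int m, real_of_int n) | m n. True}" by blast
qed

locale rauzy_setting = T_numeration +
  fixes \<beta> :: real and \<alpha> :: complex
  assumes cubic_beta: "\<beta> ^ 3 - of_int a * \<beta> ^ 2 - of_int b * \<beta> - 1 = 0"
    and cubic_alpha: "\<alpha> ^ 3 - of_int a * \<alpha> ^ 2 - of_int b * \<alpha> - 1 = 0"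
    and Im_alpha: "Im \<alpha> \<noteq> 0"
    and norm_alpha_less: "cmod \<alpha> < \<bar>\<beta>\<bar>"
begin

lemma cubic_beta_complex:
  "of_real \<beta> ^ 3 - of_int a * of_real \<beta> ^ 2 - of_int b * of_real \<beta> - (1 :: complex) = 0"
  using arg_cong[OF cubic_beta, of complex_of_real] by simp

lemma alpha_neq_beta: "\<alpha> \<noteq> of_real \<beta>"
  using Im_alpha by auto

lemma norm_alpha_less_1: "cmod \<alpha> < 1"
proof -
  have cnj: "cnj \<alpha> ^ 3 - of_int a * cnj \<alpha> ^ 2 - of_int b * cnj \<alpha> - 1 = 0"
    using arg_cong[OF cubic_alpha, of cnj] by simp
  have "cnj \<alpha> \<noteq> \<alpha>" "cnj \<alpha> \<noteq> of_real \<beta>"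
    using Im_alpha by (auto simp: complex_eq_iff)
  then have "\<alpha> * of_real \<beta> * cnj \<alpha> = 1"
    using cubic_roots_prod[OF cubic_alpha cubic_beta_complex cnj] alpha_neq_beta by auto
  then have "complex_of_real ((cmod \<alpha>) ^ 2) * of_real \<beta> = 1"
    unfolding complex_norm_square by (simp add: ac_simps)
  then have "complex_of_real ((cmod \<alpha>) ^ 2 * \<beta>) = 1"
    by simp
  then have norm_sq_beta: "(cmod \<alpha>) ^ 2 * \<beta> = 1"
    using of_real_eq_1_iff by blast
  have "0 < \<beta>"
  proof (rule ccontr)
    assume "\<not> 0 < \<beta>"
    then have "(cmod \<alpha>) ^ 2 * \<beta> \<le> 0" by (simp add: mult_nonneg_nonpos)
    with norm_sq_beta show False by simp
  qed
  moreover have "0 < cmod \<alpha>" using norm_sq_beta by (cases "cmod \<alpha> = 0") auto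
  ultimately have "(cmod \<alpha>) ^ 2 * cmod \<alpha> < (cmod \<alpha>) ^ 2 * \<beta>"
    using norm_alpha_less by (intro mult_strict_left_mono) auto
  then have "(cmod \<alpha>) ^ 3 < 1 ^ 3"
    using norm_sq_beta by (simp add: power2_eq_square power3_eq_cube)
  then show ?thesis by (rule power_less_imp_less_base) simp
qed

lemma rauzy_map_inverse_powers: "rauzy_map b \<alpha> (1 / \<beta>, 1 / \<beta> ^ 2) = \<alpha> ^ 2"
proof -
  define B where "B = complex_of_real \<beta>"
  have B: "B \<noteq> 0" using cubic_beta_complex unfolding B_def by auto
  have rel: "\<alpha> ^ 2 * B ^ 2 + of_int b * \<alpha> * B + \<alpha> + B = 0"
    using cubic_roots_relation[OF cubic_alpha cubic_beta_complex alpha_neq_beta] unfolding B_def .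
  have "rauzy_map b \<alpha> (1 / \<beta>, 1 / \<beta> ^ 2) = (- (1 + of_int b * \<alpha>) * B - \<alpha>) / B ^ 2"
    unfolding rauzy_map_def B_def using B by (simp add: field_simps power2_eq_square B_def)
  also have "\<dots> = \<alpha> ^ 2"
    using B rel by (simp add: divide_eq_eq algebra_simps) (metis add_eq_0_iff2 add.commute)
  finally show ?thesis .
qed

lemma rauzy_map_Tseq:
  "rauzy_map b \<alpha> (Tseq a b j / \<beta> - Tshift a b 1 j, Tseq a b j / \<beta> ^ 2 - Tshift a b 2 j) =
    \<alpha> ^ (j + 2)"
proof -
  have "rauzy_map b \<alpha> (Tseq a b j / \<beta> - Tshift a b 1 j, Tseq a b j / \<beta> ^ 2 - Tshift a b 2 j) =
      of_int (Tseq a b j) * rauzy_map b \<alpha> (1 / \<beta>, 1 / \<beta> ^ 2)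
      + (1 + of_int b * \<alpha>) * of_int (Tshift a b 1 j) + \<alpha> * of_int (Tshift a b 2 j)"
    by (simp add: rauzy_map_def algebra_simps add_divide_distrib)
  also have "\<dots> = \<alpha> ^ (j + 2)"
    unfolding rauzy_map_inverse_powers cubic_root_power[OF cubic_alpha, of j] ..
  finally show ?thesis .
qed

lemma rauzy_map_delta:
  assumes "\<forall>j\<ge>n. Tdigits a b N j = 0"
  shows "rauzy_map b \<alpha> (delta a b \<beta> N) = (\<Sum>j<n. of_int (Tdigits a b N j) * \<alpha> ^ (j + 2))"
  unfolding delta_eq_sum[OF assms]
  by (simp only: linear_sum[OF linear_rauzy_map] linear_scale[OF linear_rauzy_map] rauzy_map_Tseq)
    (simp add: scaleR_conv_of_real)

end

section \<open>The Rauzy fractal\<close>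

lemma summable_digit_series:
  fixes z :: complex and C :: int
  assumes "\<And>i. \<bar>c i\<bar> \<le> C" and "norm z < 1"
  shows "summable (\<lambda>i. of_int (c i) * z ^ (i + 2))"
proof (rule summable_comparison_test)
  show "summable (\<lambda>i. C * norm z ^ i)"
    using assms(2) by (intro summable_mult summable_geometric) auto
  have "norm (of_int (c i) * z ^ (i + 2)) \<le> C * norm z ^ i" for i
  proof -
    have "norm z ^ (i + 2) \<le> norm z ^ i" using assms(2) by (intro power_decreasing) auto
    moreover have "real_of_int \<bar>c i\<bar> \<le> C" using assms(1)[of i] by linarith
    ultimately show ?thesis
      using assms(1)[of i] by (simp add: norm_mult norm_power mult_mono)
  qed
  then show "\<exists>N. \<forall>n\<ge>N. norm (of_int (c n) * z ^ (n + 2)) \<le> C * norm z ^ n" by blast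
qed

lemma norm_digit_series_tail_le:
  fixes z :: complex and C :: int
  assumes bound: "\<And>i. \<bar>c i\<bar> \<le> C" and z: "norm z < 1" and low: "\<And>i. i < L \<Longrightarrow> c i = 0"
  shows "norm (\<Sum>i. of_int (c i) * z ^ (i + 2)) \<le> C * norm z ^ L / (1 - norm z)"
proof -
  define G where "G = (\<lambda>i. if i < L then 0 else C * norm z ^ i)"
  have "(\<lambda>i. C * norm z ^ L * norm z ^ i) sums (C * norm z ^ L * (1 / (1 - norm z)))"
    using z by (intro sums_mult geometric_sums) auto
  then have "(\<lambda>i. G (i + L)) sums (C * norm z ^ L / (1 - norm z))"
    unfolding G_def by (simp add: power_add algebra_simps)
  then have "G sums (C * norm z ^ L / (1 - norm z) + (\<Sum>i<L. G i))"
    by (simp only: sums_iff_shift)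
  moreover have "(\<Sum>i<L. G i) = 0" unfolding G_def by simp
  ultimately have G: "G sums (C * norm z ^ L / (1 - norm z))" by simp
  have "norm (of_int (c i) * z ^ (i + 2)) \<le> G i" for i
  proof (cases "i < L")
    case False
    have "norm z ^ (i + 2) \<le> norm z ^ i" using z by (intro power_decreasing) auto
    moreover have "real_of_int \<bar>c i\<bar> \<le> C" using bound[of i] by linarith
    ultimately show ?thesis
      using False bound[of i] by (simp add: G_def norm_mult norm_power mult_mono)
  qed (simp add: G_def low)
  then have "norm (\<Sum>i. of_int (c i) * z ^ (i + 2)) \<le> suminf G"
    using sums_summable[OF G] by (intro norm_suminf_le) auto
  then show ?thesis using sums_unique[OF G] by simp
qed

lemma finite_range_seq_convergent_subseq:
  fixes e :: "nat \<Rightarrow> nat \<Rightarrow> int"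
  assumes "finite S" and "\<And>n i. e n i \<in> S"
  obtains r d where "strict_mono r" and "\<And>i. d i \<in> S"
    and "\<And>L. eventually (\<lambda>n. \<forall>i<L. e (r n) i = d i) sequentially"
proof -
  define K where "K = PiE UNIV (\<lambda>_::nat. real_of_int ` S)"
  have "compactin (product_topology (\<lambda>_. euclidean) UNIV) K"
    unfolding K_def compactin_PiE using assms(1) by (simp add: finite_imp_compact)
  then have "seq_compact K"
    unfolding euclidean_product_topology by (simp add: compact_imp_seq_compact)
  moreover have "(\<lambda>i. real_of_int (e n i)) \<in> K" for n unfolding K_def using assms(2) by auto
  ultimately obtain l r where lK: "l \<in> K" and r: "strict_mono r"
    and lim: "((\<lambda>n i. real_of_int (e n i)) \<circ> r) \<longlonglongrightarrow> l"
    unfolding seq_compact_def by meson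
  define d where "d i = \<lfloor>l i\<rfloor>" for i
  have l: "l i = real_of_int (d i) \<and> d i \<in> S" for i
  proof -
    obtain s where "s \<in> S" "l i = real_of_int s" using lK unfolding K_def by (auto simp: PiE_iff)
    then show ?thesis unfolding d_def by simp
  qed
  have "eventually (\<lambda>n. e (r n) i = d i) sequentially" for i
  proof -
    have "(\<lambda>n. real_of_int (e (r n) i)) \<longlonglongrightarrow> l i"
      using continuous_on_tendsto_compose[OF continuous_on_product_coordinates lim]
      by (simp add: o_def)
    then have "eventually (\<lambda>n. dist (real_of_int (e (r n) i)) (l i) < 1) sequentially"
      by (rule tendstoD) simp
    then show ?thesis
      by (rule eventually_mono) (simp add: l dist_real_def flip: of_int_diff)
  qed
  then have "eventually (\<lambda>n. \<forall>i\<in>{..<L}. e (r n) i = d i) sequentially" for L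
    by (intro eventually_ball_finite) auto
  then have "eventually (\<lambda>n. \<forall>i<L. e (r n) i = d i) sequentially" for L
    by (rule eventually_mono) auto
  with r l show thesis by (intro that) auto
qed

definition rauzy_point :: "complex \<Rightarrow> (nat \<Rightarrow> int) \<Rightarrow> complex" where
  "rauzy_point \<alpha> d = (\<Sum>i. of_int (d (i + 2)) * \<alpha> ^ (i + 2))"

lemma Rauzy_eq_image: "Rauzy a b \<alpha> = rauzy_point \<alpha> ` {d. admissible a b 2 d}"
  unfolding Rauzy_def rauzy_point_def by blast

lemma rauzy_point_finite:
  assumes "\<And>j. n \<le> j \<Longrightarrow> d j = 0"
  shows "rauzy_point \<alpha> (\<lambda>i. d (i - 2)) = (\<Sum>j<n. of_int (d j) * \<alpha> ^ (j + 2))"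
  unfolding rauzy_point_def using suminf_finite[of "{..<n}" "\<lambda>i. of_int (d i) * \<alpha> ^ (i + 2)"] assms
  by simp

context rauzy_setting
begin

lemma admissible_shift_2: "admissible a b 2 (\<lambda>i. d (i - 2)) \<longleftrightarrow> admissible a b 0 d"
  using admissible_shift[of a b 0 2 d] by (simp only: add_0)

lemma rauzy_map_delta_eq_rauzy_point:
  assumes "\<forall>j\<ge>n. Tdigits a b N j = 0"
  shows "rauzy_map b \<alpha> (delta a b \<beta> N) = rauzy_point \<alpha> (\<lambda>i. Tdigits a b N (i - 2))"
  using rauzy_map_delta[OF assms] rauzy_point_finite[of n "Tdigits a b N" \<alpha>] assms by simp

lemma delta_image_subset_Rauzy: "rauzy_map b \<alpha> ` {delta a b \<beta> N | N. N \<ge> 1} \<subseteq> Rauzy a b \<alpha>"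
proof
  fix z assume "z \<in> rauzy_map b \<alpha> ` {delta a b \<beta> N | N. N \<ge> 1}"
  then obtain N where z: "z = rauzy_map b \<alpha> (delta a b \<beta> N)" by blast
  obtain n where "\<forall>j\<ge>n. Tdigits a b N j = 0" and "admissible a b 0 (Tdigits a b N)"
    using Tdigits_Trep[of N] unfolding Trep_iff by blast
  then show "z \<in> Rauzy a b \<alpha>"
    unfolding z Rauzy_eq_image rauzy_map_delta_eq_rauzy_point[OF \<open>\<forall>j\<ge>n. Tdigits a b N j = 0\<close>]
    by (intro imageI) (simp add: admissible_shift_2)
qed

lemma exists_delta_of_truncation:
  assumes d: "admissible a b 0 d"
  obtains N where "1 \<le> N"
    and "rauzy_map b \<alpha> (delta a b \<beta> N) = (\<Sum>j<Suc n. of_int (d j) * \<alpha> ^ (j + 2)) + \<alpha> ^ (n + 3)"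
proof -
  define D where "D j = (if j \<le> n then d j else if j = Suc n then 1 else 0)" for j
  have D: "admissible a b 0 D"
    unfolding D_def using a_ge_3 by (intro admissible_truncate_append[OF d]) auto
  have "0 \<le> D j" for j using D unfolding admissible_def by auto
  then have "0 \<le> digit_value a b D (Suc n)" by (intro digit_value_nonneg)
  moreover have "digit_value a b D (Suc (Suc n)) = Tseq a b (Suc n) + digit_value a b D (Suc n)"
    by (simp add: D_def)
  ultimately have V: "1 \<le> digit_value a b D (Suc (Suc n))"
    using Tseq_pos[of "Suc n"] by (metis add_increasing2)
  define N where "N = nat (digit_value a b D (Suc (Suc n)))"
  have N: "int N = digit_value a b D (Suc (Suc n))"
    unfolding N_def using V by simp
  have "Trep a b N D"
    unfolding Trep_iff using D N by (intro conjI exI[of _ "Suc (Suc n)"]) (auto simp: D_def)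
  then have "Tdigits a b N = D" by (rule Tdigits_eqI)
  then have "rauzy_map b \<alpha> (delta a b \<beta> N) = (\<Sum>j<Suc n. of_int (d j) * \<alpha> ^ (j + 2)) + \<alpha> ^ (n + 3)"
    using rauzy_map_delta[of "Suc (Suc n)" N] by (simp add: D_def numeral_eq_Suc)
  moreover have "1 \<le> N" using N V by linarith
  ultimately show thesis by (rule that[rotated])
qed

lemma Rauzy_subset_closure_delta_image:
  "Rauzy a b \<alpha> \<subseteq> closure (rauzy_map b \<alpha> ` {delta a b \<beta> N | N. N \<ge> 1})"
proof
  fix z assume "z \<in> Rauzy a b \<alpha>"
  then obtain e where e: "admissible a b 2 e" and z: "z = rauzy_point \<alpha> e"
    unfolding Rauzy_eq_image by blast
  define d where "d j = e (j + 2)" for j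
  have "admissible a b 2 (\<lambda>i. d (i - 2))"
    using e by (subst admissible_cong[where d' = e]) (auto simp: d_def numeral_2_eq_2 Suc_diff_Suc)
  then have "admissible a b 0 d" by (simp add: admissible_shift_2)
  then have "\<forall>n. \<exists>N. 1 \<le> N \<and>
      rauzy_map b \<alpha> (delta a b \<beta> N) = (\<Sum>j<Suc n. of_int (d j) * \<alpha> ^ (j + 2)) + \<alpha> ^ (n + 3)"
    by (metis exists_delta_of_truncation)
  then obtain N where N: "\<And>n. 1 \<le> N n" and image: "\<And>n. rauzy_map b \<alpha> (delta a b \<beta> (N n)) =
      (\<Sum>j<Suc n. of_int (d j) * \<alpha> ^ (j + 2)) + \<alpha> ^ (n + 3)"
    by metis
  have "summable (\<lambda>i. of_int (d i) * \<alpha> ^ (i + 2))"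
    using e norm_alpha_less_1 unfolding admissible_def d_def
    by (intro summable_digit_series[where C = "a - 1"]) (auto simp: abs_le_iff)
  then have "(\<lambda>n. \<Sum>j<Suc n. of_int (d j) * \<alpha> ^ (j + 2)) \<longlonglongrightarrow> z"
    unfolding z rauzy_point_def d_def using summable_LIMSEQ' by (simp add: lessThan_Suc_atMost)
  moreover have "(\<lambda>n. \<alpha> ^ (n + 3)) \<longlonglongrightarrow> 0"
    using LIMSEQ_ignore_initial_segment[OF LIMSEQ_power_zero[OF norm_alpha_less_1], of 3] .
  ultimately have "(\<lambda>n. rauzy_map b \<alpha> (delta a b \<beta> (N n))) \<longlonglongrightarrow> z"
    unfolding image using tendsto_add[of _ z sequentially _ 0] by simp
  moreover have "rauzy_map b \<alpha> (delta a b \<beta> (N n)) \<in> rauzy_map b \<alpha> ` {delta a b \<beta> N | N. N \<ge> 1}"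
    for n
    using N[of n] by blast
  ultimately show "z \<in> closure (rauzy_map b \<alpha> ` {delta a b \<beta> N | N. N \<ge> 1})"
    unfolding closure_sequential by (intro exI[of _ "\<lambda>n. rauzy_map b \<alpha> (delta a b \<beta> (N n))"]) simp
qed

lemma rauzy_point_dist_le:
  assumes "\<And>i. 0 \<le> d (i + 2) \<and> d (i + 2) \<le> a - 1" and "\<And>i. 0 \<le> d' (i + 2) \<and> d' (i + 2) \<le> a - 1"
    and "\<And>i. i < L \<Longrightarrow> d (i + 2) = d' (i + 2)"
  shows "dist (rauzy_point \<alpha> d) (rauzy_point \<alpha> d') \<le> (a - 1) * cmod \<alpha> ^ L / (1 - cmod \<alpha>)"
proof -
  have "summable (\<lambda>i. of_int (d (i + 2)) * \<alpha> ^ (i + 2))"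
    and "summable (\<lambda>i. of_int (d' (i + 2)) * \<alpha> ^ (i + 2))"
    using assms(1,2) norm_alpha_less_1
    by (intro summable_digit_series[where C = "a - 1"]; force simp: abs_le_iff)+
  then have "rauzy_point \<alpha> d - rauzy_point \<alpha> d' =
      (\<Sum>i. of_int (d (i + 2) - d' (i + 2)) * \<alpha> ^ (i + 2))"
    unfolding rauzy_point_def by (subst suminf_diff) (simp_all add: algebra_simps)
  also have "norm \<dots> \<le> (a - 1) * cmod \<alpha> ^ L / (1 - cmod \<alpha>)"
  proof (rule norm_digit_series_tail_le[OF _ norm_alpha_less_1])
    show "\<bar>d (i + 2) - d' (i + 2)\<bar> \<le> a - 1" for i
      using assms(1,2)[of i] by (auto simp: abs_le_iff)
  qed (use assms(3) in simp)
  finally show ?thesis by (simp add: dist_norm)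
qed

lemma rauzy_point_tendsto:
  assumes "\<And>n i. 0 \<le> e n (i + 2) \<and> e n (i + 2) \<le> a - 1" and "\<And>i. 0 \<le> d (i + 2) \<and> d (i + 2) \<le> a - 1"
    and agree: "\<And>L. eventually (\<lambda>n. \<forall>i<L. e n (i + 2) = d (i + 2)) sequentially"
  shows "(\<lambda>n. rauzy_point \<alpha> (e n)) \<longlonglongrightarrow> rauzy_point \<alpha> d"
proof (rule tendstoI)
  fix \<epsilon> :: real assume "0 < \<epsilon>"
  have "(\<lambda>L. (a - 1) * cmod \<alpha> ^ L / (1 - cmod \<alpha>)) \<longlonglongrightarrow> 0"
    using norm_alpha_less_1
    by (intro tendsto_divide_zero tendsto_mult_right_zero LIMSEQ_power_zero) simp
  then have "eventually (\<lambda>L. (a - 1) * cmod \<alpha> ^ L / (1 - cmod \<alpha>) < \<epsilon>) sequentially"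
    using \<open>0 < \<epsilon>\<close> by (intro order_tendstoD(2)) auto
  then obtain L where L: "(a - 1) * cmod \<alpha> ^ L / (1 - cmod \<alpha>) < \<epsilon>"
    unfolding eventually_sequentially by blast
  show "eventually (\<lambda>n. dist (rauzy_point \<alpha> (e n)) (rauzy_point \<alpha> d) < \<epsilon>) sequentially"
    using agree[of L]
  proof (rule eventually_mono)
    fix n assume "\<forall>i<L. e n (i + 2) = d (i + 2)"
    then have "dist (rauzy_point \<alpha> (e n)) (rauzy_point \<alpha> d) \<le> (a - 1) * cmod \<alpha> ^ L / (1 - cmod \<alpha>)"
      using assms(1,2) by (intro rauzy_point_dist_le) auto
    with L show "dist (rauzy_point \<alpha> (e n)) (rauzy_point \<alpha> d) < \<epsilon>" by linarith
  qed
qed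

lemma closed_Rauzy: "closed (Rauzy a b \<alpha>)"
  unfolding closed_sequential_limits
proof (intro allI impI, elim conjE)
  fix x z assume "\<forall>n. x n \<in> Rauzy a b \<alpha>" and lim: "x \<longlonglongrightarrow> z"
  then have "\<forall>n. \<exists>d. admissible a b 2 d \<and> x n = rauzy_point \<alpha> d"
    unfolding Rauzy_eq_image by blast
  then obtain e where e: "\<And>n. admissible a b 2 (e n)" and x: "\<And>n. x n = rauzy_point \<alpha> (e n)"
    by metis
  have digits: "e n (i + 2) \<in> {0..a - 1}" for n i
    using e[of n] unfolding admissible_def by auto
  obtain r l where r: "strict_mono r" and l: "\<And>i. l i \<in> {0..a - 1}"
    and agree: "\<And>L. eventually (\<lambda>n. \<forall>i<L. e (r n) (i + 2) = l i) sequentially"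
    using finite_range_seq_convergent_subseq[of "{0..a - 1}" "\<lambda>n i. e n (i + 2)"] digits by blast
  define d where "d i = l (i - 2)" for i
  have "admissible a b 2 d"
  proof (rule admissible_if_approximated)
    fix L
    obtain n where n: "\<forall>i<L. e (r n) (i + 2) = l i"
      using agree[of L] unfolding eventually_sequentially by blast
    define f where "f i = (if i < 2 then d i else e (r n) i)" for i
    have "admissible a b 2 f"
      using e[of "r n"] by (subst admissible_cong[where d' = "e (r n)"]) (auto simp: f_def)
    moreover have "f i = d i" if "i < L" for i
    proof (cases "i < 2")
      case False
      then have "i - 2 < L" "i - 2 + 2 = i" using that by auto
      then have "e (r n) i = l (i - 2)" using n by metis
      with False show ?thesis by (simp add: f_def d_def)
    qed (simp add: f_def)
    ultimately show "\<exists>f. admissible a b 2 f \<and> (\<forall>i<L. f i = d i)" by blast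
  qed
  have "(\<lambda>n. rauzy_point \<alpha> (e (r n))) \<longlonglongrightarrow> rauzy_point \<alpha> d"
    using digits l agree by (intro rauzy_point_tendsto) (auto simp: d_def)
  moreover have "(\<lambda>n. rauzy_point \<alpha> (e (r n))) \<longlonglongrightarrow> z"
    using LIMSEQ_subseq_LIMSEQ[OF lim r] by (simp add: o_def x)
  ultimately have "z = rauzy_point \<alpha> d" by (rule LIMSEQ_unique[rotated])
  with \<open>admissible a b 2 d\<close> show "z \<in> Rauzy a b \<alpha>" unfolding Rauzy_eq_image by blast
qed

end

theorem proposition3p3:
  fixes a b :: int and \<beta> :: real and \<alpha> :: complex
  assumes "- a + 1 \<le> b" and "b \<le> -2"
    and "\<beta> ^ 3 - of_int a * \<beta> ^ 2 - of_int b * \<beta> - 1 = 0"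
    and "\<alpha> ^ 3 - of_int a * \<alpha> ^ 2 - of_int b * \<alpha> - 1 = 0"
    and "Im \<alpha> \<noteq> 0"
    and "cmod \<alpha> < \<bar>\<beta>\<bar>"
  shows "\<exists>f :: real \<times> real \<Rightarrow> complex. linear f \<and> bij f \<and>
           f ` Eset a b \<beta> = Rauzy a b \<alpha> \<and>
           f ` {(real_of_int m, real_of_int n) | m n. True} =
             {of_int m + of_int n * \<alpha> | m n. True}"
proof -
  interpret rauzy_setting a b \<beta> \<alpha>
    using assms by unfold_locales
  have "rauzy_map b \<alpha> ` Eset a b \<beta> = closure (rauzy_map b \<alpha> ` {delta a b \<beta> N | N. N \<ge> 1})"
    unfolding Eset_def
    by (rule closure_injective_linear_image[OF linear_rauzy_map
        bij_is_inj[OF bij_rauzy_map[OF Im_alpha]]])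
  also have "\<dots> = Rauzy a b \<alpha>"
    by (intro equalityI closure_minimal delta_image_subset_Rauzy closed_Rauzy
        Rauzy_subset_closure_delta_image)
  finally show ?thesis
    by (intro exI[of _ "rauzy_map b \<alpha>"] conjI linear_rauzy_map bij_rauzy_map Im_alpha
        rauzy_map_lattice)
qed

end
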